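(* Let $\chi$ be a kernel, let $f:\mathbb{R}^+\to\mathbb{R}$ be bounded, and let $t\in\mathbb{R}^+$ be a point of non-removable jump discontinuity of $f$. For $\alpha\in\mathbb{R}$ the following are equivalent: (i) $\displaystyle\lim_{w\to\infty,\ w\log t\in\mathbb{Z}}(S_w^\chi f)(t)=\alpha f(t+0)+[1-\alpha-\chi(1)]f(t-0)+\chi(1)f(t)$; (ii) $\psi_\chi^-(1)=\alpha$; (iii) $\psi_\chi^+(1)=1-\alpha-\chi(1)$.
   Context: Let $\mathbb{R}^+=(0,\infty)$. For $\chi:\mathbb{R}^+\to\mathbb{R}$ and $\nu\ge 0$ set $M_\nu(\chi):=\sup_{u>0}\sum_{k\in\mathbb{Z}}|\chi(e^{-k}u)|\,|k-\log u|^\nu$ (with $|k-\log u|^0:=1$). A kernel is a function $\chi:\mathbb{R}^+\to\mathbb{R}$ such that (K1) $\sum_{k\in\mathbb{Z}}\chi(e^{-k}u)=1$ for every $u\in\mathbb{R}^+$, and (K2) $M_0(\chi)<\infty$ and $M_\nu(\chi)<\infty$ for some $\nu>0$. For a bounded $f:\mathbb{R}^+\to\mathbb{R}$, $w>0$ and $t\in\mathbb{R}^+$, the exponential sampling series is $(S_w^\chi f)(t)=\sum_{k\in\mathbb{Z}}\chi(e^{-k}t^w)\,f(e^{k/w})$. Define $\psi_\chi^+(u):=\sum_{k\in\mathbb{Z},\,k<\log u}\chi(e^{-k}u)$ and $\psi_\chi^-(u):=\sum_{k\in\mathbb{Z},\,k>\log u}\chi(e^{-k}u)$ for $u\in\mathbb{R}^+$.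 $f(t\pm0)$ denote the right/left limits of $f$ at $t$; $t$ is a non-removable jump discontinuity of $f$ if $f(t+0)$ and $f(t-0)$ exist, are finite, and $f(t+0)\ne f(t-0)$. The limit in (i) is taken as $w\to\infty$ through those $w>0$ with $w\log t\in\mathbb{Z}$. *)

theory Defs
  imports "HOL-Analysis.Analysis"
begin

definition mom_weight :: "real \<Rightarrow> int \<Rightarrow> real \<Rightarrow> real" where
  "mom_weight \<nu> k u = (if \<nu> = 0 then 1 else \<bar>real_of_int k - ln u\<bar> powr \<nu>)"

definition abs_moment :: "(real \<Rightarrow> real) \<Rightarrow> real \<Rightarrow> ennreal" where
  "abs_moment K \<nu> = (SUP u\<in>{0<..}. infsum (\<lambda>k::int. ennreal (\<bar>K (exp (- real_of_int k) * u)\<bar> * mom_weight \<nu> k u)) UNIV)"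

definition kernel :: "(real \<Rightarrow> real) \<Rightarrow> bool" where
  "kernel K \<longleftrightarrow>
     (\<forall>u>0. ((\<lambda>k::int. K (exp (- real_of_int k) * u)) has_sum 1) UNIV) \<and>
     abs_moment K 0 < \<infinity> \<and> (\<exists>\<nu>>0. abs_moment K \<nu> < \<infinity>)"

definition exp_sampling :: "(real \<Rightarrow> real) \<Rightarrow> real \<Rightarrow> (real \<Rightarrow> real) \<Rightarrow> real \<Rightarrow> real" where
  "exp_sampling K w f t = infsum (\<lambda>k::int. K (exp (- real_of_int k) * t powr w) * f (exp (real_of_int k / w))) UNIV"

definition psi_plus :: "(real \<Rightarrow> real) \<Rightarrow> real \<Rightarrow> real" where
  "psi_plus K u = infsum (\<lambda>k::int. K (exp (- real_of_int k) * u)) {k. real_of_int k < ln u}"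

definition psi_minus :: "(real \<Rightarrow> real) \<Rightarrow> real \<Rightarrow> real" where
  "psi_minus K u = infsum (\<lambda>k::int. K (exp (- real_of_int k) * u)) {k. real_of_int k > ln u}"

end

theory Submission
  imports Defs
begin

(* On the grid w ln t = n (n an integer) the shift k = m + n turns the sampling series into
   sum_m chi(e^-m) f(t e^(m/w)). As w tends to infinity the sample f(t e^(m/w)) tends to
   f(t+0), f(t) or f(t-0) according to the sign of m, so by dominated convergence the series
   tends to psi^-(1) f(t+0) + chi(1) f(t) + psi^+(1) f(t-0). Since psi^+(1) + chi(1) + psi^-(1) = 1
   and f(t+0) differs from f(t-0), this is the prescribed limit exactly when psi^-(1) = alpha. *)

lemma tendsto_infsum_dominated_at_top:
  fixes s :: "real \<Rightarrow> 'a \<Rightarrow> real" and f w :: "'a \<Rightarrow> real"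
  assumes w: "w summable_on UNIV"
    and bound: "\<And>r x. \<bar>s r x\<bar> \<le> w x"
    and lim: "\<And>x. ((\<lambda>r. s r x) \<longlongrightarrow> f x) at_top"
  shows "((\<lambda>r. infsum (s r) UNIV) \<longlongrightarrow> infsum f UNIV) at_top"
proof -
  \<comment> \<open>Lebesgue's dominated convergence theorem for the counting measure\<close>
  let ?M = "count_space (UNIV :: 'a set)"
  have int_w: "integrable ?M w"
    using w abs_summable_equivalent summable_on_iff_abs_summable_on_real
    unfolding abs_summable_on_def by blast
  have f_bound: "\<bar>f x\<bar> \<le> w x" for x
    by (rule tendsto_upperbound[OF tendsto_rabs[OF lim]]) (simp_all add: bound)
  have int_s: "integrable ?M (s r)" for r
    by (rule Bochner_Integration.integrable_bound[OF int_w]) (auto intro: order_trans[OF bound abs_ge_self])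
  have int_f: "integrable ?M f"
    by (rule Bochner_Integration.integrable_bound[OF int_w]) (auto intro: order_trans[OF f_bound abs_ge_self])
  have "((\<lambda>r. integral\<^sup>L ?M (s r)) \<longlongrightarrow> integral\<^sup>L ?M f) at_top"
    by (rule integral_dominated_convergence_at_top[where w=w]) (use int_w bound lim in auto)
  then show ?thesis
    using infsetsum_infsum[of f UNIV] infsetsum_infsum[of "s _" UNIV] int_s int_f
    unfolding infsetsum_def abs_summable_on_def by simp
qed

lemma infsum_int_split_at_zero:
  fixes h :: "int \<Rightarrow> 'a::{topological_comm_monoid_add, t2_space}"
  assumes "\<And>A. h summable_on A"
  shows "infsum h UNIV = infsum h {k. k < 0} + h 0 + infsum h {k. k > 0}"
proof -
  have "UNIV = ({k::int. k < 0} \<union> {0}) \<union> {k. k > 0}" by auto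
  also have "infsum h \<dots> = infsum h ({k::int. k < 0} \<union> {0}) + infsum h {k. k > 0}"
    by (rule infsum_Un_disjoint) (auto simp: assms)
  also have "infsum h ({k::int. k < 0} \<union> {0}) = infsum h {k. k < 0} + h 0"
    by (subst infsum_Un_disjoint) (auto simp: assms)
  finally show ?thesis .
qed

lemma summable_on_mult_bounded:
  fixes g h :: "'a \<Rightarrow> real"
  assumes "g summable_on UNIV" and "\<And>x. \<bar>h x\<bar> \<le> B"
  shows "(\<lambda>x. g x * h x) summable_on A"
proof -
  have "(\<lambda>x. norm (g x) * B) summable_on UNIV"
    using summable_on_iff_abs_summable_on_real[THEN iffD1, OF assms(1)] by (rule summable_on_cmult_left)
  then have "(\<lambda>x. norm (g x * h x)) summable_on UNIV"
    by (rule summable_on_comparison_test) (simp_all add: abs_mult mult_left_mono assms(2))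
  then show ?thesis
    by (rule summable_on_iff_abs_summable_on_real[THEN iffD2, THEN summable_on_subset]) simp
qed

lemma tendsto_mult_exp_div_at_top:
  fixes t c :: real
  shows "((\<lambda>w. t * exp (c / w)) \<longlongrightarrow> t) at_top"
proof -
  have "((\<lambda>w. c / w) \<longlongrightarrow> 0) at_top"
    by (rule tendsto_divide_0[OF tendsto_const filterlim_at_top_imp_at_infinity[OF filterlim_ident]])
  from tendsto_mult[OF tendsto_const[of t] tendsto_exp[OF this]] show ?thesis by simp
qed

lemma filterlim_mult_exp_div_at_right:
  fixes t c :: real
  assumes "t > 0" "c > 0"
  shows "filterlim (\<lambda>w. t * exp (c / w)) (at_right t) at_top"
proof (rule tendsto_imp_filterlim_at_right[OF tendsto_mult_exp_div_at_top])
  show "\<forall>\<^sub>F w in at_top. t * exp (c / w) > t"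
    using eventually_gt_at_top[of 0] by eventually_elim (use assms in simp)
qed

lemma filterlim_mult_exp_div_at_left:
  fixes t c :: real
  assumes "t > 0" "c < 0"
  shows "filterlim (\<lambda>w. t * exp (c / w)) (at_left t) at_top"
proof (rule tendsto_imp_filterlim_at_left[OF tendsto_mult_exp_div_at_top])
  show "\<forall>\<^sub>F w in at_top. t * exp (c / w) < t"
    using eventually_gt_at_top[of 0] by eventually_elim (use assms in \<open>simp add: divide_neg_pos\<close>)
qed

lemma grid_at_top_neq_bot:
  fixes c :: real
  shows "inf at_top (principal {w. w > 0 \<and> w * c \<in> \<int>}) \<noteq> bot"
proof
  assume "inf at_top (principal {w. w > 0 \<and> w * c \<in> \<int>}) = bot"
  then have "\<forall>\<^sub>F w in inf at_top (principal {w. w > 0 \<and> w * c \<in> \<int>}). False"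
    by simp
  then have "\<forall>\<^sub>F w in at_top. \<not> (w > 0 \<and> w * c \<in> \<int>)"
    unfolding eventually_inf_principal by simp
  then obtain N where N: "\<And>w. w \<ge> N \<Longrightarrow> \<not> (w > 0 \<and> w * c \<in> \<int>)"
    by (auto simp: eventually_at_top_linorder)
  \<comment> \<open>d is chosen so that n / d is a grid point for every natural n\<close>
  define d where "d = (if c = 0 then 1 else \<bar>c\<bar>)"
  define n where "n = nat \<lceil>N * d\<rceil> + 1"
  have "d > 0" by (simp add: d_def)
  have "N * d \<le> real n" unfolding n_def by linarith
  then have "real n / d \<ge> N" using \<open>d > 0\<close> by (simp add: field_simps)
  moreover have "real n / d > 0" using \<open>d > 0\<close> by (simp add: n_def)
  moreover have "real n / d * c = (if c = 0 then 0 else if c > 0 then real n else - real n)"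
    by (simp add: d_def)
  then have "real n / d * c \<in> \<int>"
    by simp
  ultimately show False using N by blast
qed

lemma kernel_has_sum_at_one:
  assumes "kernel K"
  shows "((\<lambda>k::int. K (exp (- of_int k))) has_sum 1) UNIV"
  using assms unfolding kernel_def by (auto dest: spec[of _ 1])

lemma kernel_psi_plus_psi_minus:
  assumes "kernel K"
  shows "psi_plus K 1 + K 1 + psi_minus K 1 = 1"
proof -
  let ?g = "\<lambda>k::int. K (exp (- of_int k))"
  have "?g summable_on A" for A
    using kernel_has_sum_at_one[OF assms] has_sum_imp_summable summable_on_subset by blast
  then have "infsum ?g UNIV = psi_plus K 1 + K 1 + psi_minus K 1"
    by (simp add: infsum_int_split_at_zero psi_plus_def psi_minus_def)
  then show ?thesis using kernel_has_sum_at_one[OF assms] infsumI by fastforce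
qed

lemma exp_sampling_on_grid:
  assumes "t > 0" and "w * ln t = of_int n" and "w \<noteq> 0"
  shows "exp_sampling K w f t = infsum (\<lambda>m::int. K (exp (- of_int m)) * f (t * exp (of_int m / w))) UNIV"
  unfolding exp_sampling_def
proof (rule sym, rule infsum_reindex_bij_witness[where j = "\<lambda>m. m + n" and i = "\<lambda>k. k - n"])
  fix m :: int
  have "t powr w = exp (of_int n)"
    using assms by (simp add: powr_def mult.commute)
  moreover have "of_int (m + n) / w = of_int m / w + ln t"
    using assms by (simp add: add_divide_distrib divide_eq_eq mult.commute)
  then have "exp (of_int (m + n) / w) = t * exp (of_int m / w)"
    using assms by (simp add: exp_add)
  moreover have "exp (- of_int (m + n)) * exp (of_int n) = exp (- of_int m :: real)"
    by (simp flip: exp_add)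
  ultimately show "K (exp (- of_int (m + n)) * t powr w) * f (exp (of_int (m + n) / w))
      = K (exp (- of_int m)) * f (t * exp (of_int m / w))"
    by simp
qed auto

lemma tendsto_sampled_jump_at_top:
  fixes g :: "int \<Rightarrow> real" and f :: "real \<Rightarrow> real"
  assumes g: "g summable_on UNIV"
    and bounded: "\<And>x. x > 0 \<Longrightarrow> \<bar>f x\<bar> \<le> B"
    and "t > 0"
    and right: "(f \<longlongrightarrow> fp) (at_right t)"
    and left: "(f \<longlongrightarrow> fm) (at_left t)"
  shows "((\<lambda>w. infsum (\<lambda>m. g m * f (t * exp (of_int m / w))) UNIV)
          \<longlongrightarrow> infsum g {k. k < 0} * fm + g 0 * f t + infsum g {k. k > 0} * fp) at_top"
proof -
  define L where "L m = (if m < 0 then fm else if m = 0 then f t else fp)" for m :: int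
  have lim: "((\<lambda>w. f (t * exp (of_int m / w))) \<longlongrightarrow> L m) at_top" for m
  proof (cases m "0::int" rule: linorder_cases)
    case less
    with filterlim_compose[OF left filterlim_mult_exp_div_at_left[OF \<open>t > 0\<close>]]
    show ?thesis by (simp add: L_def)
  next
    case equal
    then show ?thesis by (simp add: L_def)
  next
    case greater
    with filterlim_compose[OF right filterlim_mult_exp_div_at_right[OF \<open>t > 0\<close>]]
    show ?thesis by (simp add: L_def)
  qed
  have sample_bound: "\<bar>f (t * exp (of_int m / w))\<bar> \<le> B" for m w
    using \<open>t > 0\<close> by (intro bounded) simp
  have L_bound: "\<bar>L m\<bar> \<le> B" for m
    by (rule tendsto_upperbound[OF tendsto_rabs[OF lim]]) (simp_all add: sample_bound)
  have "((\<lambda>w. infsum (\<lambda>m. g m * f (t * exp (of_int m / w))) UNIV) \<longlongrightarrow> infsum (\<lambda>m. g m * L m) UNIV) at_top"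
  proof (rule tendsto_infsum_dominated_at_top[where w = "\<lambda>m. \<bar>g m\<bar> * B"])
    show "(\<lambda>m. \<bar>g m\<bar> * B) summable_on UNIV"
      using summable_on_iff_abs_summable_on_real[THEN iffD1, OF g] by (simp add: summable_on_cmult_left)
    show "\<bar>g m * f (t * exp (of_int m / w))\<bar> \<le> \<bar>g m\<bar> * B" for m w
      by (simp add: abs_mult mult_left_mono sample_bound)
  qed (intro tendsto_mult tendsto_const lim)
  also have "infsum (\<lambda>m. g m * L m) UNIV
      = infsum (\<lambda>m. g m * L m) {k. k < 0} + g 0 * f t + infsum (\<lambda>m. g m * L m) {k. k > 0}"
    by (subst infsum_int_split_at_zero[OF summable_on_mult_bounded[OF g L_bound]]) (simp add: L_def)
  also have "infsum (\<lambda>m. g m * L m) {k. k < 0} = infsum g {k. k < 0} * fm"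
    by (subst infsum_cmult_left[symmetric]) (auto intro: summable_on_subset[OF g] infsum_cong simp: L_def)
  also have "infsum (\<lambda>m. g m * L m) {k. k > 0} = infsum g {k. k > 0} * fp"
    by (subst infsum_cmult_left[symmetric]) (auto intro: summable_on_subset[OF g] infsum_cong simp: L_def)
  finally show ?thesis .
qed

lemma tendsto_exp_sampling_at_jump:
  assumes "kernel K"
    and bounded: "\<And>x. x > 0 \<Longrightarrow> \<bar>f x\<bar> \<le> B"
    and "t > 0"
    and "(f \<longlongrightarrow> fp) (at_right t)"
    and "(f \<longlongrightarrow> fm) (at_left t)"
  shows "((\<lambda>w. exp_sampling K w f t) \<longlongrightarrow> psi_plus K 1 * fm + K 1 * f t + psi_minus K 1 * fp)
           (inf at_top (principal {w. w > 0 \<and> w * ln t \<in> \<int>}))"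
proof -
  let ?F = "inf at_top (principal {w. w > 0 \<and> w * ln t \<in> \<int>})"
  let ?shifted = "\<lambda>w. infsum (\<lambda>m::int. K (exp (- of_int m)) * f (t * exp (of_int m / w))) UNIV"
  have "(\<lambda>k::int. K (exp (- of_int k))) summable_on UNIV"
    using kernel_has_sum_at_one[OF assms(1)] by (rule has_sum_imp_summable)
  from tendsto_sampled_jump_at_top[OF this bounded assms(3-5)]
  have "(?shifted \<longlongrightarrow> psi_plus K 1 * fm + K 1 * f t + psi_minus K 1 * fp) at_top"
    by (simp add: psi_plus_def psi_minus_def)
  then have "(?shifted \<longlongrightarrow> psi_plus K 1 * fm + K 1 * f t + psi_minus K 1 * fp) ?F"
    by (rule tendsto_mono[rotated]) simp
  moreover have "\<forall>\<^sub>F w in ?F. exp_sampling K w f t = ?shifted w"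
    unfolding eventually_inf_principal
  proof (rule always_eventually, intro allI impI)
    fix w assume "w \<in> {w. w > 0 \<and> w * ln t \<in> \<int>}"
    then obtain n where "w > 0" "w * ln t = of_int n" by (auto elim: Ints_cases)
    with \<open>t > 0\<close> show "exp_sampling K w f t = ?shifted w"
      by (intro exp_sampling_on_grid) auto
  qed
  ultimately show ?thesis
    by (subst tendsto_cong)
qed

theorem theorem2:
  fixes K f :: "real \<Rightarrow> real" and t fp fm \<alpha> :: real
  assumes "kernel K"
    and "\<exists>B. \<forall>x>0. \<bar>f x\<bar> \<le> B"
    and "t > 0"
    and "(f \<longlongrightarrow> fp) (at_right t)"
    and "(f \<longlongrightarrow> fm) (at_left t)"
    and "fp \<noteq> fm"
  shows "(((\<lambda>w. exp_sampling K w f t) \<longlongrightarrow> \<alpha> * fp + (1 - \<alpha> - K 1) * fm + K 1 * f t)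
            (inf at_top (principal {w. w > 0 \<and> w * ln t \<in> \<int>}))
          \<longleftrightarrow> psi_minus K 1 = \<alpha>)
       \<and> (psi_minus K 1 = \<alpha> \<longleftrightarrow> psi_plus K 1 = 1 - \<alpha> - K 1)"
proof -
  let ?F = "inf at_top (principal {w. w > 0 \<and> w * ln t \<in> \<int>})"
  let ?S = "psi_plus K 1 * fm + K 1 * f t + psi_minus K 1 * fp"
  let ?T = "\<alpha> * fp + (1 - \<alpha> - K 1) * fm + K 1 * f t"
  obtain B where "\<And>x. x > 0 \<Longrightarrow> \<bar>f x\<bar> \<le> B" using assms(2) by blast
  from tendsto_exp_sampling_at_jump[OF assms(1) this assms(3-5)]
  have limit: "((\<lambda>w. exp_sampling K w f t) \<longlongrightarrow> ?S) ?F" .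
  have psi_plus_eq: "psi_plus K 1 = 1 - K 1 - psi_minus K 1"
    using kernel_psi_plus_psi_minus[OF assms(1)] by linarith
  have "((\<lambda>w. exp_sampling K w f t) \<longlongrightarrow> ?T) ?F \<longleftrightarrow> ?T = ?S"
  proof
    assume "((\<lambda>w. exp_sampling K w f t) \<longlongrightarrow> ?T) ?F"
    then show "?T = ?S" by (rule tendsto_unique[OF grid_at_top_neq_bot _ limit])
  qed (use limit in \<open>simp only:\<close>)
  also have "\<dots> \<longleftrightarrow> (\<alpha> - psi_minus K 1) * (fp - fm) = 0"
    unfolding psi_plus_eq by (simp add: algebra_simps)
  also have "\<dots> \<longleftrightarrow> psi_minus K 1 = \<alpha>"
    using assms(6) by auto
  finally show ?thesis
    unfolding psi_plus_eq by linarith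
qed

end
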